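(* $\mathsf{LPO}<_W\mathsf{B_F}$ and $\mathsf{LLPO}<_W\mathsf{B_I^-}$.
   Context: A represented space is a pair $(X,\delta_X)$ with $\delta_X:\subseteq\mathbb N^{\mathbb N}\to X$ a partial surjection. For a partial multi-valued map $f:\subseteq X\rightrightarrows Y$ between represented spaces, a realizer of $f$ is a partial function $F:\subseteq\mathbb N^{\mathbb N}\to\mathbb N^{\mathbb N}$ with $\delta_Y(F(p))\in f(\delta_X(p))$ for all $p\in\mathrm{dom}(f\circ\delta_X)$. We write $f\le_W g$ (Weihrauch reducibility) if there are computable partial functions $H,K:\subseteq\mathbb N^{\mathbb N}\to\mathbb N^{\mathbb N}$ such that for every realizer $G$ of $g$ the function $p\mapsto H\langle p,G(K(p))\rangle$ is a realizer of $f$, where $\langle\cdot,\cdot\rangle$ is a standard computable pairing on $\mathbb N^{\mathbb N}$. $f<_W g$ means $f\le_W g$ and $g\not\le_W f$. $\mathsf{LPO}:\mathbb N^{\mathbb N}\to\mathbb N$ maps $p$ to $0$ if $p(n)=0$ for some $n$ and to $1$ otherwise. $\mathsf{LLPO}:\subseteq\mathbb N^{\mathbb N}\rightrightarrows\mathbb N$ is defined on sequences $p$ with $p(k)\ne0$ for at most one $k$, with $0\in\mathsf{LLPO}(p)$ iff $p(2n)=0$ for all $n$ and $1\in\mathsf{LLPO}(p)$ iff $p(2n+1)=0$ for all $n$. $\mathbb R$ carries the Cauchy representation; $\mathbb R_<$ (resp. $\mathbb R_>$) is $\mathbb R$ represented by sequences of rationals with supremum (resp. infimum) the number. $\mathsf{B_F}:\mathbb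 R_<\rightrightarrows\mathbb R$, $x\mapsto[x,\infty)$. $\mathsf{B_I^-}:\subseteq\mathbb R_<\times\mathbb R_>\rightrightarrows\mathbb R$, $(x,y)\mapsto[x,y]$, defined for $x<y$. *)

theory Defs
  imports Complex_Main "HOL-Library.Nat_Bijection"
begin

datatype rf = Zero | Succ | Proj nat | Orac | Comp rf "rf list" | Prec rf rf | Mu rf

inductive ev :: "(nat \<Rightarrow> nat) \<Rightarrow> rf \<Rightarrow> nat list \<Rightarrow> nat \<Rightarrow> bool" for p where
  ev_zero: "ev p Zero xs 0"
| ev_succ: "ev p Succ (x # xs) (Suc x)"
| ev_proj: "i < length xs \<Longrightarrow> ev p (Proj i) xs (xs ! i)"
| ev_orac: "ev p Orac (x # xs) (p x)"
| ev_comp: "list_all2 (\<lambda>g y. ev p g xs y) gs ys \<Longrightarrow> ev p f ys z \<Longrightarrow> ev p (Comp f gs) xs z"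
| ev_prec0: "ev p f xs z \<Longrightarrow> ev p (Prec f g) (0 # xs) z"
| ev_precS: "ev p (Prec f g) (n # xs) y \<Longrightarrow> ev p g (y # n # xs) z \<Longrightarrow> ev p (Prec f g) (Suc n # xs) z"
| ev_mu: "ev p f (n # xs) 0 \<Longrightarrow> (\<forall>m<n. \<exists>y. y \<noteq> 0 \<and> ev p f (m # xs) y) \<Longrightarrow> ev p (Mu f) xs n"

type_synonym baire = "nat \<Rightarrow> nat"

definition computable :: "(baire \<Rightarrow> baire option) \<Rightarrow> bool" where
  "computable F \<longleftrightarrow> (\<exists>e. \<forall>p q. F p = Some q \<longrightarrow> (\<forall>n. ev p e [n] (q n)))"

definition bpair :: "baire \<Rightarrow> baire \<Rightarrow> baire" where
  "bpair p q = (\<lambda>n. if even n then p (n div 2) else q (n div 2))"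

text \<open>A representation is a partial map from Baire space; multi-valued maps are
 'a \<Rightarrow> 'b set, with domain the set of points with nonempty value set.\<close>
type_synonym 'a rep = "baire \<Rightarrow> 'a option"

definition realizer :: "'a rep \<Rightarrow> 'b rep \<Rightarrow> ('a \<Rightarrow> 'b set) \<Rightarrow> (baire \<Rightarrow> baire option) \<Rightarrow> bool" where
  "realizer \<delta>X \<delta>Y f F \<longleftrightarrow>
     (\<forall>p x. \<delta>X p = Some x \<and> f x \<noteq> {} \<longrightarrow> (\<exists>q y. F p = Some q \<and> \<delta>Y q = Some y \<and> y \<in> f x))"

definition weihrauch_le ::
  "'a rep \<Rightarrow> 'b rep \<Rightarrow> ('a \<Rightarrow> 'b set) \<Rightarrow> 'c rep \<Rightarrow> 'd rep \<Rightarrow> ('c \<Rightarrow> 'd set) \<Rightarrow> bool" where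
  "weihrauch_le \<delta>X \<delta>Y f \<delta>U \<delta>V g \<longleftrightarrow>
     (\<exists>H K. computable H \<and> computable K \<and>
        (\<forall>G. realizer \<delta>U \<delta>V g G \<longrightarrow>
           realizer \<delta>X \<delta>Y f (\<lambda>p. Option.bind (K p) (\<lambda>k. Option.bind (G k) (\<lambda>r. H (bpair p r))))))"

definition weihrauch_less ::
  "'a rep \<Rightarrow> 'b rep \<Rightarrow> ('a \<Rightarrow> 'b set) \<Rightarrow> 'c rep \<Rightarrow> 'd rep \<Rightarrow> ('c \<Rightarrow> 'd set) \<Rightarrow> bool" where
  "weihrauch_less \<delta>X \<delta>Y f \<delta>U \<delta>V g \<longleftrightarrow>
     weihrauch_le \<delta>X \<delta>Y f \<delta>U \<delta>V g \<and> \<not> weihrauch_le \<delta>U \<delta>V g \<delta>X \<delta>Y f"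

definition rep_baire :: "baire rep" where
  "rep_baire p = Some p"

definition rep_nat :: "nat rep" where
  "rep_nat p = Some (p 0)"

definition nu_Q :: "nat \<Rightarrow> real" where
  "nu_Q n = (case prod_decode n of (a, b) \<Rightarrow> real_of_int (int_decode a) / real (Suc b))"

definition cauchy_name :: "baire \<Rightarrow> real \<Rightarrow> bool" where
  "cauchy_name p x \<longleftrightarrow> (\<forall>n. \<bar>nu_Q (p n) - x\<bar> \<le> (1/2) ^ n)"

definition rep_cauchy :: "real rep" where
  "rep_cauchy p = (if \<exists>x. cauchy_name p x then Some (THE x. cauchy_name p x) else None)"

definition lower_name :: "baire \<Rightarrow> real \<Rightarrow> bool" where
  "lower_name p x \<longleftrightarrow> (\<forall>n. nu_Q (p n) \<le> x) \<and> (\<forall>\<epsilon>>0. \<exists>n. x - \<epsilon> < nu_Q (p n))"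

definition upper_name :: "baire \<Rightarrow> real \<Rightarrow> bool" where
  "upper_name p x \<longleftrightarrow> (\<forall>n. x \<le> nu_Q (p n)) \<and> (\<forall>\<epsilon>>0. \<exists>n. nu_Q (p n) < x + \<epsilon>)"

definition rep_lower :: "real rep" where
  "rep_lower p = (if \<exists>x. lower_name p x then Some (THE x. lower_name p x) else None)"

definition rep_upper :: "real rep" where
  "rep_upper p = (if \<exists>x. upper_name p x then Some (THE x. upper_name p x) else None)"

definition rep_prod :: "'a rep \<Rightarrow> 'b rep \<Rightarrow> ('a \<times> 'b) rep" where
  "rep_prod \<delta>1 \<delta>2 r =
     (case (\<delta>1 (\<lambda>n. r (2 * n)), \<delta>2 (\<lambda>n. r (2 * n + 1))) of
        (Some a, Some b) \<Rightarrow> Some (a, b) | _ \<Rightarrow> None)"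

definition LPO :: "baire \<Rightarrow> nat set" where
  "LPO p = (if \<exists>n. p n = 0 then {0} else {1})"

definition LLPO :: "baire \<Rightarrow> nat set" where
  "LLPO p = (if \<forall>k l. p k \<noteq> 0 \<and> p l \<noteq> 0 \<longrightarrow> k = l
             then {i. (i = 0 \<and> (\<forall>n. p (2 * n) = 0)) \<or> (i = 1 \<and> (\<forall>n. p (2 * n + 1) = 0))}
             else {})"

definition B_F :: "real \<Rightarrow> real set" where
  "B_F x = {x..}"

definition B_I_minus :: "real \<times> real \<Rightarrow> real set" where
  "B_I_minus xy = (if fst xy < snd xy then {fst xy .. snd xy} else {})"

end

theory Submission
  imports Defs
begin

(* For LPO the input p is sent to a lower name of the position of its first
   zero, and the first rational approximation of any solution bounds the search
   for a zero.  For LLPO the input is sent to a name of an interval that lies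
   to the right of 1/2 or to the left of -1/2 once a non-zero even or odd entry
   appears; the sign of a solution answers the instance.

   For the converse directions we prove the use principle: terminating oracle
   computations read only a finite prefix of the oracle, so computable maps are
   continuous.  A reduction to LPO or LLPO must also work with the realizer that
   answers according to a finitely witnessed property of the instance; the
   resulting realizer is then continuous at some point of the domain
   (discrete_reduction_continuous_somewhere).  For B_F this is refuted by names
   of arbitrarily large numbers sharing a prefix, for B_I^- by redirecting an
   interval name to two disjoint subintervals. *)

section \<open>Oracle computations are deterministic and use a finite part of the oracle\<close>

inductive_cases ev_ZeroE: "ev p Zero xs y"
inductive_cases ev_SuccE: "ev p Succ xs y"
inductive_cases ev_ProjE: "ev p (Proj i) xs y"
inductive_cases ev_OracE: "ev p Orac xs y"
inductive_cases ev_CompE: "ev p (Comp f gs) xs y"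
inductive_cases ev_Prec0E: "ev p (Prec f g) (0 # xs) y"
inductive_cases ev_PrecSE: "ev p (Prec f g) (Suc n # xs) y"
inductive_cases ev_MuE: "ev p (Mu f) xs y"

lemma list_all2_unique:
  assumes "list_all2 (\<lambda>g y. \<forall>y'. P g y' \<longrightarrow> y = y') gs ys" and "list_all2 P gs ys'"
  shows "ys = ys'"
  using assms by (induction gs ys arbitrary: ys' rule: list_all2_induct)
    (auto simp: list_all2_Cons1)

lemma ev_deterministic: "ev p e xs y \<Longrightarrow> ev p e xs y' \<Longrightarrow> y = y'"
proof (induction arbitrary: y' rule: ev.induct)
  case (ev_zero xs) then show ?case by (auto elim: ev_ZeroE)
next
  case (ev_succ x xs) then show ?case by (auto elim: ev_SuccE)
next
  case (ev_proj i xs) then show ?case by (auto elim: ev_ProjE)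
next
  case (ev_orac x xs) then show ?case by (auto elim: ev_OracE)
next
  case (ev_comp xs gs ys f z)
  from \<open>ev p (Comp f gs) xs y'\<close> obtain ys' where
    ys': "list_all2 (\<lambda>g y. ev p g xs y) gs ys'" and f: "ev p f ys' y'"
    by (rule ev_CompE)
  have "list_all2 (\<lambda>g y. \<forall>y'. ev p g xs y' \<longrightarrow> y = y') gs ys"
    using ev_comp.IH(1) by (rule list_all2_mono) blast
  then have "ys = ys'" using ys' by (rule list_all2_unique)
  with f show ?case using ev_comp.IH(2) by blast
next
  case (ev_prec0 f xs z g)
  then show ?case by (blast elim: ev_Prec0E)
next
  case (ev_precS f g n xs y z)
  from \<open>ev p (Prec f g) (Suc n # xs) y'\<close> obtain y2 where
    "ev p (Prec f g) (n # xs) y2" and "ev p g (y2 # n # xs) y'"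
    by (rule ev_PrecSE)
  with ev_precS.IH show ?case by blast
next
  case (ev_mu f n xs)
  from \<open>ev p (Mu f) xs y'\<close> have y'_zero: "ev p f (y' # xs) 0"
    and y'_least: "\<forall>m<y'. \<exists>y. y \<noteq> 0 \<and> ev p f (m # xs) y"
    by (auto elim: ev_MuE)
  show ?case
  proof (rule linorder_cases[of n y'])
    assume "n < y'"
    then obtain y where "y \<noteq> 0" "ev p f (n # xs) y" using y'_least by blast
    then show ?thesis using ev_mu.IH(1) by blast
  next
    assume "y' < n"
    then obtain y where "y \<noteq> 0" "\<forall>y''. ev p f (y' # xs) y'' \<longrightarrow> y = y''"
      using ev_mu.IH(2) by blast
    then show ?thesis using y'_zero by blast
  qed
qed

definition agree :: "nat \<Rightarrow> baire \<Rightarrow> baire \<Rightarrow> bool" where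
  "agree N p p' \<longleftrightarrow> (\<forall>i<N. p' i = p i)"

lemma agree_max: "agree (max M N) p p' \<Longrightarrow> agree M p p' \<and> agree N p p'"
  by (auto simp: agree_def)

lemma agree_bpair: "agree N p p' \<Longrightarrow> agree N (bpair p c) (bpair p' c)"
  unfolding agree_def bpair_def by (auto dest: spec[of _ "_ div 2"])

definition ev_on_prefix :: "baire \<Rightarrow> rf \<Rightarrow> nat list \<Rightarrow> nat \<Rightarrow> bool" where
  "ev_on_prefix p e xs y \<longleftrightarrow> (\<exists>N. \<forall>p'. agree N p p' \<longrightarrow> ev p' e xs y)"

lemma ev_on_prefix_list:
  "list_all2 (\<lambda>g y. ev_on_prefix p g xs y) gs ys \<Longrightarrow>
   \<exists>N. \<forall>p'. agree N p p' \<longrightarrow> list_all2 (\<lambda>g y. ev p' g xs y) gs ys"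
proof (induction rule: list_all2_induct)
  case (Cons g gs y ys)
  then obtain N1 N2 where "\<forall>p'. agree N1 p p' \<longrightarrow> ev p' g xs y"
    "\<forall>p'. agree N2 p p' \<longrightarrow> list_all2 (\<lambda>g y. ev p' g xs y) gs ys"
    by (auto simp: ev_on_prefix_def)
  then show ?case by (intro exI[of _ "max N1 N2"]) (auto dest: agree_max)
qed simp

lemma ev_on_prefix_bounded:
  "\<forall>m<n. ev_on_prefix p f (m # xs) (h m) \<Longrightarrow>
   \<exists>N. \<forall>p'. agree N p p' \<longrightarrow> (\<forall>m<n. ev p' f (m # xs) (h m))"
proof (induction n)
  case (Suc n)
  then obtain N1 N2 where "\<forall>p'. agree N1 p p' \<longrightarrow> (\<forall>m<n. ev p' f (m # xs) (h m))"
    "\<forall>p'. agree N2 p p' \<longrightarrow> ev p' f (n # xs) (h n)"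
    by (auto simp: ev_on_prefix_def)
  then show ?case by (intro exI[of _ "max N1 N2"]) (auto dest: agree_max simp: less_Suc_eq)
qed simp

lemma ev_use: "ev p e xs y \<Longrightarrow> ev_on_prefix p e xs y"
proof (induction rule: ev.induct)
  case (ev_orac x xs)
  have "ev p' Orac (x # xs) (p x)" if "agree (Suc x) p p'" for p'
    using that ev.ev_orac[of p' x xs] by (simp add: agree_def)
  then show ?case unfolding ev_on_prefix_def by blast
next
  case (ev_comp xs gs ys f z)
  have "list_all2 (\<lambda>g y. ev_on_prefix p g xs y) gs ys"
    using ev_comp.IH(1) by (rule list_all2_mono) simp
  then obtain N1 where "\<forall>p'. agree N1 p p' \<longrightarrow> list_all2 (\<lambda>g y. ev p' g xs y) gs ys"
    using ev_on_prefix_list by blast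
  moreover obtain N2 where "\<forall>p'. agree N2 p p' \<longrightarrow> ev p' f ys z"
    using ev_comp.IH(2) by (auto simp: ev_on_prefix_def)
  ultimately show ?case unfolding ev_on_prefix_def
    by (intro exI[of _ "max N1 N2"]) (auto dest: agree_max intro: ev.ev_comp)
next
  case (ev_precS f g n xs y z)
  then obtain N1 N2 where "\<forall>p'. agree N1 p p' \<longrightarrow> ev p' (Prec f g) (n # xs) y"
    "\<forall>p'. agree N2 p p' \<longrightarrow> ev p' g (y # n # xs) z"
    by (auto simp: ev_on_prefix_def)
  then show ?case unfolding ev_on_prefix_def
    by (intro exI[of _ "max N1 N2"]) (auto dest: agree_max intro: ev.ev_precS)
next
  case (ev_mu f n xs)
  obtain N1 where N1: "\<forall>p'. agree N1 p p' \<longrightarrow> ev p' f (n # xs) 0"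
    using ev_mu.IH(1) by (auto simp: ev_on_prefix_def)
  obtain h where h: "\<forall>m<n. h m \<noteq> 0 \<and> ev_on_prefix p f (m # xs) (h m)"
    using ev_mu.IH(2) by metis
  then obtain N2 where N2: "\<forall>p'. agree N2 p p' \<longrightarrow> (\<forall>m<n. ev p' f (m # xs) (h m))"
    using ev_on_prefix_bounded[of n p f xs h] by blast
  have "ev p' (Mu f) xs n" if "agree (max N1 N2) p p'" for p'
  proof (rule ev.ev_mu)
    show "ev p' f (n # xs) 0" using that N1 by (auto dest: agree_max)
    show "\<forall>m<n. \<exists>y. y \<noteq> 0 \<and> ev p' f (m # xs) y"
      using that N2 h by (blast dest: agree_max)
  qed
  then show ?case unfolding ev_on_prefix_def by blast
qed (auto simp: ev_on_prefix_def intro: ev.ev_zero ev.ev_succ ev.ev_proj ev.ev_prec0)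

lemma computable_continuous:
  assumes "computable F" "F p = Some q"
  shows "\<exists>N. \<forall>p' q'. agree N p p' \<longrightarrow> F p' = Some q' \<longrightarrow> q' m = q m"
proof -
  obtain e where e: "\<forall>p q. F p = Some q \<longrightarrow> (\<forall>n. ev p e [n] (q n))"
    using assms(1) by (auto simp: computable_def)
  then obtain N where "\<forall>p'. agree N p p' \<longrightarrow> ev p' e [m] (q m)"
    using assms(2) ev_use[of p e "[m]" "q m"] unfolding ev_on_prefix_def by blast
  then show ?thesis using e ev_deterministic by metis
qed

text \<open>Minimisation-free programs applied to the right number of arguments always
  terminate; their value can then be computed by recursion on the program.\<close>
fun wf_prog :: "rf \<Rightarrow> nat \<Rightarrow> bool" where
  "wf_prog Zero n = True"
| "wf_prog Succ n = (1 \<le> n)"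
| "wf_prog (Proj i) n = (i < n)"
| "wf_prog Orac n = (1 \<le> n)"
| "wf_prog (Comp f gs) n = ((\<forall>g\<in>set gs. wf_prog g n) \<and> wf_prog f (length gs))"
| "wf_prog (Prec f g) n = (1 \<le> n \<and> wf_prog f (n - 1) \<and> wf_prog g (Suc n))"
| "wf_prog (Mu f) n = False"

fun den :: "baire \<Rightarrow> rf \<Rightarrow> nat list \<Rightarrow> nat" where
  "den p Zero xs = 0"
| "den p Succ xs = Suc (hd xs)"
| "den p (Proj i) xs = xs ! i"
| "den p Orac xs = p (hd xs)"
| "den p (Comp f gs) xs = den p f (map (\<lambda>g. den p g xs) gs)"
| "den p (Prec f g) xs = rec_nat (den p f (tl xs)) (\<lambda>k y. den p g (y # k # tl xs)) (hd xs)"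
| "den p (Mu f) xs = 0"

lemma den_Prec0 [simp]: "den p (Prec f g) (0 # xs) = den p f xs"
  by simp

lemma den_PrecS [simp]:
  "den p (Prec f g) (Suc n # xs) = den p g (den p (Prec f g) (n # xs) # n # xs)"
  by simp

declare den.simps(6) [simp del]

lemma ev_den: "wf_prog e (length xs) \<Longrightarrow> ev p e xs (den p e xs)"
proof (induction e arbitrary: xs)
  case Succ then show ?case by (cases xs) (auto intro: ev_succ)
next
  case Orac then show ?case by (cases xs) (auto intro: ev_orac)
next
  case (Comp f gs)
  have "list_all2 (\<lambda>g y. ev p g xs y) gs (map (\<lambda>g. den p g xs) gs)"
    using Comp by (simp add: list_all2_conv_all_nth)
  with Comp show ?case by (auto intro: ev_comp)
next
  case (Prec f g)
  then obtain v ys where xs: "xs = v # ys" by (cases xs) auto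
  have "ev p (Prec f g) (n # ys) (den p (Prec f g) (n # ys))" for n
    using Prec xs by (induction n) (auto intro: ev_prec0 ev_precS)
  then show ?case using xs by simp
qed (auto intro: ev_zero ev_proj)

lemma computable_den: "wf_prog e 1 \<Longrightarrow> computable (\<lambda>p. Some (\<lambda>n. den p e [n]))"
  unfolding computable_def using ev_den[of e "[_]"] by auto

lemma weihrauch_le_by_programs:
  assumes "wf_prog eK 1" "wf_prog eH 1"
    and correct: "\<And>p x. \<delta>X p = Some x \<Longrightarrow> f x \<noteq> {} \<Longrightarrow>
      \<exists>u. \<delta>U (\<lambda>n. den p eK [n]) = Some u \<and> g u \<noteq> {} \<and>
        (\<forall>r v. \<delta>V r = Some v \<longrightarrow> v \<in> g u \<longrightarrow>
           (\<exists>y. \<delta>Y (\<lambda>n. den (bpair p r) eH [n]) = Some y \<and> y \<in> f x))"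
  shows "weihrauch_le \<delta>X \<delta>Y f \<delta>U \<delta>V g"
  unfolding weihrauch_le_def
proof (intro exI conjI allI impI)
  show "computable (\<lambda>p. Some (\<lambda>n. den p eH [n]))" "computable (\<lambda>p. Some (\<lambda>n. den p eK [n]))"
    using assms(1,2) by (simp_all add: computable_den)
  fix G assume G: "realizer \<delta>U \<delta>V g G"
  show "realizer \<delta>X \<delta>Y f (\<lambda>p. Option.bind (Some (\<lambda>n. den p eK [n]))
          (\<lambda>k. Option.bind (G k) (\<lambda>r. Some (\<lambda>n. den (bpair p r) eH [n]))))"
    unfolding realizer_def
  proof (intro allI impI, elim conjE)
    fix p x assume "\<delta>X p = Some x" "f x \<noteq> {}"
    then obtain u where u: "\<delta>U (\<lambda>n. den p eK [n]) = Some u" "g u \<noteq> {}" and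
      post: "\<forall>r v. \<delta>V r = Some v \<longrightarrow> v \<in> g u \<longrightarrow>
           (\<exists>y. \<delta>Y (\<lambda>n. den (bpair p r) eH [n]) = Some y \<and> y \<in> f x)"
      using correct by blast
    then obtain r v where "G (\<lambda>n. den p eK [n]) = Some r" "\<delta>V r = Some v" "v \<in> g u"
      using G unfolding realizer_def by blast
    with post show "\<exists>q y. Option.bind (Some (\<lambda>n. den p eK [n]))
          (\<lambda>k. Option.bind (G k) (\<lambda>r. Some (\<lambda>n. den (bpair p r) eH [n]))) = Some q \<and>
          \<delta>Y q = Some y \<and> y \<in> f x"
      by auto
  qed
qed

definition "addP = Prec (Proj 0) (Comp Succ [Proj 0])"
definition "predP = Prec Zero (Proj 1)"
definition "monusP = Prec (Proj 0) (Comp predP [Proj 0])"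
definition "iszP = Prec (Comp Succ [Zero]) Zero"
definition "sgP = Comp iszP [Comp iszP [Proj 0]]"
definition "triP = Prec Zero (Comp addP [Proj 0, Comp Succ [Proj 1]])"
definition "parP = Prec Zero (Comp iszP [Proj 0])"
definition "dblP = Comp addP [Proj 0, Proj 0]"
definition "leP = Comp iszP [Comp monusP [Proj 1, Proj 0]]"

fun cnst :: "nat \<Rightarrow> rf" where
  "cnst 0 = Zero"
| "cnst (Suc k) = Comp Succ [cnst k]"

definition ifzP :: "nat \<Rightarrow> rf \<Rightarrow> rf \<Rightarrow> rf \<Rightarrow> rf" where
  "ifzP n c a b = Comp (Prec a (Comp b (map Proj [2..<n+2]))) (c # map Proj [0..<n])"

lemma wf_addP [simp]: "2 \<le> n \<Longrightarrow> wf_prog addP n" by (simp add: addP_def)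
lemma wf_predP [simp]: "1 \<le> n \<Longrightarrow> wf_prog predP n" by (simp add: predP_def)
lemma wf_monusP [simp]: "2 \<le> n \<Longrightarrow> wf_prog monusP n" by (simp add: monusP_def)
lemma wf_iszP [simp]: "1 \<le> n \<Longrightarrow> wf_prog iszP n" by (simp add: iszP_def)
lemma wf_sgP [simp]: "1 \<le> n \<Longrightarrow> wf_prog sgP n" by (simp add: sgP_def)
lemma wf_triP [simp]: "1 \<le> n \<Longrightarrow> wf_prog triP n" by (simp add: triP_def)
lemma wf_parP [simp]: "1 \<le> n \<Longrightarrow> wf_prog parP n" by (simp add: parP_def)
lemma wf_dblP [simp]: "1 \<le> n \<Longrightarrow> wf_prog dblP n" by (simp add: dblP_def)
lemma wf_leP [simp]: "2 \<le> n \<Longrightarrow> wf_prog leP n" by (simp add: leP_def)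
lemma wf_cnst [simp]: "wf_prog (cnst k) n" by (induction k) auto
lemma wf_ifzP [simp]: "wf_prog c n \<Longrightarrow> wf_prog a n \<Longrightarrow> wf_prog b n \<Longrightarrow> wf_prog (ifzP n c a b) n"
  by (simp add: ifzP_def del: upt_Suc)

lemma den_addP [simp]: "den p addP (a # b # xs) = a + b"
  by (induction a) (simp_all add: addP_def)
lemma den_predP [simp]: "den p predP (a # xs) = a - 1"
  by (cases a) (simp_all add: predP_def)
lemma den_monusP [simp]: "den p monusP (b # a # xs) = a - b"
  by (induction b) (simp_all add: monusP_def)
lemma den_iszP [simp]: "den p iszP (a # xs) = (if a = 0 then 1 else 0)"
  by (cases a) (simp_all add: iszP_def)
lemma den_sgP [simp]: "den p sgP (a # xs) = (if a = 0 then 0 else 1)"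
  by (simp add: sgP_def)
lemma den_triP [simp]: "den p triP (a # xs) = triangle a"
  by (induction a) (simp_all add: triP_def)
lemma den_parP [simp]: "den p parP (a # xs) = a mod 2"
  by (induction a) (simp_all add: parP_def mod_Suc)
lemma den_dblP [simp]: "den p dblP (a # xs) = a + a"
  by (simp add: dblP_def)
lemma den_leP [simp]: "den p leP (a # b # xs) = (if a \<le> b then 1 else 0)"
  by (simp add: leP_def)
lemma den_cnst [simp]: "den p (cnst k) xs = k"
  by (induction k) auto

lemma den_ifzP [simp]:
  assumes "length xs = n"
  shows "den p (ifzP n c a b) xs = (if den p c xs = 0 then den p a xs else den p b xs)"
proof -
  have args: "map (\<lambda>g. den p g xs) (map Proj [0..<n]) = xs"
    using assms by (intro nth_equalityI) auto
  have skip2: "map (\<lambda>g. den p g (y # k # xs)) (map Proj [2..<n + 2]) = xs" for y k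
    using assms by (intro nth_equalityI) (auto simp del: upt_Suc)
  have "den p (ifzP n c a b) xs = den p (Prec a (Comp b (map Proj [2..<n+2]))) (den p c xs # xs)"
    by (simp only: ifzP_def den.simps(5) list.map args)
  then show ?thesis
    by (cases "den p c xs") (simp_all only: den_Prec0 den_PrecS den.simps(5) skip2, simp_all)
qed

lemma nu_Q_encode: "nu_Q (prod_encode (a, b)) = real_of_int (int_decode a) / real (Suc b)"
  by (simp add: nu_Q_def)

definition nat_code :: "nat \<Rightarrow> nat" where
  "nat_code i = triangle (i + i) + (i + i)"

lemma nu_Q_nat_code: "nu_Q (nat_code i) = real i"
proof -
  have "nat_code i = prod_encode (i + i, 0)"
    by (simp add: nat_code_def prod_encode_def)
  moreover have "int_decode (i + i) = int i"
    by (simp add: int_decode_def sum_decode_def)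
  ultimately show ?thesis by (simp add: nu_Q_encode)
qed

lemma nu_Q_0: "nu_Q 0 = 0"
  using nu_Q_nat_code[of 0] by (simp add: nat_code_def)

text \<open>A code is an upper bound for the rational it denotes; this lets a
  program turn an approximation of a real into a search bound.\<close>
lemma nu_Q_le: "nu_Q c \<le> real c"
proof -
  obtain a b where c: "c = prod_encode (a, b)"
    by (metis prod_decode_inverse surj_pair)
  have "real_of_int (int_decode a) / real (Suc b) \<le> max 0 (real_of_int (int_decode a))"
  proof (cases "int_decode a \<ge> 0")
    case True
    then have "real_of_int (int_decode a) / real (Suc b) \<le> real_of_int (int_decode a)"
      by (simp add: divide_le_eq mult_le_cancel_left1)
    then show ?thesis by simp
  qed (simp add: divide_nonpos_pos)
  also have "\<dots> \<le> real a"
    by (auto simp: int_decode_def sum_decode_def)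
  also have "\<dots> \<le> real c"
    using c le_prod_encode_1 by simp
  finally show ?thesis using c by (simp add: nu_Q_encode)
qed

lemma nu_Q_surj: "r \<in> \<rat> \<Longrightarrow> \<exists>c. nu_Q c = r"
proof -
  assume "r \<in> \<rat>"
  then obtain a :: int and b :: nat where r: "r = of_int a / of_nat b" and b: "b \<noteq> 0"
    by (rule Rats_cases') (metis of_int_of_nat_eq zero_less_imp_eq_int less_irrefl)
  then have "nu_Q (prod_encode (int_encode a, b - 1)) = r"
    by (simp add: nu_Q_encode)
  then show ?thesis by blast
qed

lemma nu_Q_consts: "nu_Q 2 = -1" "nu_Q 8 = 1/2" "nu_Q 5 = 1" "nu_Q 4 = -1/2"
proof -
  have d: "int_decode (Suc 0) = -1" "int_decode 2 = 1"
    by (simp_all add: int_decode_def sum_decode_def)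
  have "2 = prod_encode (1, 0)" "8 = prod_encode (2, 1)" "5 = prod_encode (2, 0)"
    "4 = prod_encode (1, 1)"
    by (simp_all add: prod_encode_def triangle_def)
  then show "nu_Q 2 = -1" "nu_Q 8 = 1/2" "nu_Q 5 = 1" "nu_Q 4 = -1/2"
    by (simp_all only: nu_Q_encode) (simp_all add: d)
qed

lemma lower_name_least:
  assumes "lower_name p x" "\<forall>n. nu_Q (p n) \<le> y"
  shows "x \<le> y"
proof (rule ccontr)
  assume "\<not> x \<le> y"
  then have "x - y > 0" by simp
  then obtain n where "x - (x - y) < nu_Q (p n)"
    using assms(1) unfolding lower_name_def by blast
  moreover have "nu_Q (p n) \<le> y" using assms(2) by blast
  ultimately show False by simp
qed

lemma upper_name_greatest:
  assumes "upper_name p x" "\<forall>n. y \<le> nu_Q (p n)"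
  shows "y \<le> x"
proof (rule ccontr)
  assume "\<not> y \<le> x"
  then have "y - x > 0" by simp
  then obtain n where "nu_Q (p n) < x + (y - x)"
    using assms(1) unfolding upper_name_def by blast
  moreover have "y \<le> nu_Q (p n)" using assms(2) by blast
  ultimately show False by simp
qed

lemma cauchy_name_unique:
  assumes "cauchy_name p x" "cauchy_name p y"
  shows "x = y"
proof (rule ccontr)
  assume "x \<noteq> y"
  then obtain n where n: "(1/2::real) ^ n < \<bar>x - y\<bar> / 2"
    using real_arch_pow_inv[of "\<bar>x - y\<bar> / 2" "1/2"] by auto
  have "\<bar>nu_Q (p n) - x\<bar> \<le> (1/2) ^ n" "\<bar>nu_Q (p n) - y\<bar> \<le> (1/2) ^ n"
    using assms unfolding cauchy_name_def by auto
  then have "\<bar>x - y\<bar> \<le> 2 * (1/2) ^ n"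
    by (auto simp: abs_le_iff)
  then show False using n by argo
qed

lemma the_rep_iff:
  assumes "\<And>x y. P x \<Longrightarrow> P y \<Longrightarrow> x = y"
  shows "(if \<exists>x. P x then Some (THE x. P x) else None) = Some x \<longleftrightarrow> P x"
proof -
  have "\<And>z. P z \<Longrightarrow> (THE x. P x) = z" using assms by (blast intro: the_equality)
  then show ?thesis by auto
qed

lemma rep_lower_iff: "rep_lower p = Some x \<longleftrightarrow> lower_name p x"
  unfolding rep_lower_def by (rule the_rep_iff) (simp add: antisym lower_name_def lower_name_least)

lemma rep_upper_iff: "rep_upper p = Some x \<longleftrightarrow> upper_name p x"
  unfolding rep_upper_def by (rule the_rep_iff) (simp add: antisym upper_name_def upper_name_greatest)

lemma rep_cauchy_iff: "rep_cauchy p = Some x \<longleftrightarrow> cauchy_name p x"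
  unfolding rep_cauchy_def by (rule the_rep_iff) (rule cauchy_name_unique)

lemma rep_prod_iff: "rep_prod rep_lower rep_upper r = Some (x, y) \<longleftrightarrow>
    lower_name (\<lambda>n. r (2 * n)) x \<and> upper_name (\<lambda>n. r (2 * n + 1)) y"
  unfolding rep_prod_def
  by (auto simp: rep_lower_iff[symmetric] rep_upper_iff[symmetric] split: option.splits)

lemma cauchy_name_first: "cauchy_name r t \<Longrightarrow> t \<le> nu_Q (r 0) + 1"
  unfolding cauchy_name_def by (drule spec[of _ 0]) simp

lemma bpair_odd: "bpair p r (2 * n + 1) = r n"
  by (simp add: bpair_def)

lemma bpair_even: "bpair p r (n + n) = p n"
  by (simp add: bpair_def)

section \<open>LPO reduces to B_F\<close>

text \<open>The preprocessing turns p into a lower name of the position of its first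
  zero after position 0 (or of 0 if there is none).  Any number above that
  position yields, through its first rational approximation, a bound below
  which the postprocessing can search for a zero of p.\<close>

definition lpo_bound :: "baire \<Rightarrow> real" where
  "lpo_bound p = (if \<exists>j. 1 \<le> j \<and> p j = 0 then real (LEAST j. 1 \<le> j \<and> p j = 0) else 0)"

primrec lpo_lower :: "baire \<Rightarrow> nat \<Rightarrow> nat" where
  "lpo_lower p 0 = 0"
| "lpo_lower p (Suc k) =
     (if lpo_lower p k = 0 then (if p (Suc k) = 0 then nat_code (Suc k) else 0) else lpo_lower p k)"

lemma nat_code_pos: "1 \<le> i \<Longrightarrow> nat_code i \<noteq> 0"
  by (simp add: nat_code_def)

lemma lpo_lower_eq:
  "lpo_lower p n =
     (if \<exists>j. 1 \<le> j \<and> j \<le> n \<and> p j = 0 then nat_code (LEAST j. 1 \<le> j \<and> p j = 0) else 0)"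
proof (induction n)
  case (Suc k)
  consider (earlier) "\<exists>j. 1 \<le> j \<and> j \<le> k \<and> p j = 0"
    | (now) "\<not> (\<exists>j. 1 \<le> j \<and> j \<le> k \<and> p j = 0)" "p (Suc k) = 0"
    | (none) "\<not> (\<exists>j. 1 \<le> j \<and> j \<le> k \<and> p j = 0)" "p (Suc k) \<noteq> 0"
    by blast
  then show ?case
  proof cases
    case earlier
    then have "1 \<le> (LEAST j. 1 \<le> j \<and> p j = 0)" by (metis (mono_tags, lifting) LeastI)
    then have "lpo_lower p k \<noteq> 0" using Suc earlier nat_code_pos by simp
    then show ?thesis using Suc earlier by (auto simp: le_Suc_eq)
  next
    case now
    then have "lpo_lower p k = 0" by (simp only: Suc.IH if_False)
    then have "lpo_lower p (Suc k) = nat_code (Suc k)" using now(2) by simp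
    moreover have "(LEAST j. 1 \<le> j \<and> p j = 0) = Suc k"
      by (rule Least_equality) (use now in \<open>auto simp: not_less_eq_eq[symmetric]\<close>)
    ultimately show ?thesis using now(2) by auto
  next
    case none
    then have "lpo_lower p k = 0" by (simp only: Suc.IH if_False)
    then have "lpo_lower p (Suc k) = 0" using none(2) by simp
    moreover have "\<not> (\<exists>j. 1 \<le> j \<and> j \<le> Suc k \<and> p j = 0)"
      using none le_Suc_eq by auto
    ultimately show ?thesis by (simp only: if_False)
  qed
qed simp

lemma lower_name_lpo_lower: "lower_name (lpo_lower p) (lpo_bound p)"
  unfolding lower_name_def
proof (intro conjI allI impI)
  show "nu_Q (lpo_lower p n) \<le> lpo_bound p" for n
    by (auto simp: lpo_lower_eq lpo_bound_def nu_Q_nat_code nu_Q_0)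
next
  fix e :: real assume e: "0 < e"
  show "\<exists>n. lpo_bound p - e < nu_Q (lpo_lower p n)"
  proof (cases "\<exists>j. 1 \<le> j \<and> p j = 0")
    case True
    define L where "L = (LEAST j. 1 \<le> j \<and> p j = 0)"
    have "1 \<le> L \<and> p L = 0" unfolding L_def using True by (metis (mono_tags, lifting) LeastI)
    then have "lpo_lower p L = nat_code L" by (auto simp: lpo_lower_eq L_def)
    then show ?thesis using e True by (intro exI[of _ L]) (simp add: nu_Q_nat_code lpo_bound_def L_def)
  next
    case False
    then have "lpo_bound p = 0" by (simp only: lpo_bound_def if_not_P[OF False] if_False)
    then show ?thesis using e by (intro exI[of _ 0]) (simp add: nu_Q_0)
  qed
qed

definition "natcodeP = Comp addP [Comp triP [dblP], dblP]"

lemma wf_natcodeP [simp]: "1 \<le> n \<Longrightarrow> wf_prog natcodeP n"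
  by (simp add: natcodeP_def)

lemma den_natcodeP [simp]: "den p natcodeP (a # xs) = nat_code a"
  by (simp add: natcodeP_def nat_code_def)

definition "K_LPO = Prec Zero (ifzP 2 (Proj 0)
   (ifzP 2 (Comp Orac [Comp Succ [Proj 1]]) (Comp natcodeP [Comp Succ [Proj 1]]) Zero) (Proj 0))"

lemma wf_K_LPO: "wf_prog K_LPO 1"
  by (simp add: K_LPO_def ifzP_def)

lemma den_K_LPO: "den p K_LPO [n] = lpo_lower p n"
  by (induction n) (simp_all add: K_LPO_def)

definition "zeroP = Prec (Comp iszP [Comp Orac [Zero]])
   (ifzP 2 (Proj 0) (Comp iszP [Comp Orac [Comp dblP [Comp Succ [Proj 1]]]]) (cnst 1))"

lemma den_zeroP: "den q zeroP [k] = (if \<exists>i\<le>k. q (i + i) = 0 then 1 else 0)"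
  by (induction k) (auto simp: zeroP_def le_Suc_eq)

definition "H_LPO = Comp iszP [Comp zeroP [Comp Succ [Comp Orac [Comp Succ [Zero]]]]]"

lemma wf_H_LPO: "wf_prog H_LPO 1"
  by (simp add: H_LPO_def zeroP_def ifzP_def)

lemma den_H_LPO: "den (bpair p r) H_LPO [n] = (if \<exists>i\<le>r 0 + 1. p i = 0 then 0 else 1)"
proof -
  have "bpair p r (Suc 0) = r 0" using bpair_odd[of p r 0] by simp
  then show ?thesis by (simp add: H_LPO_def den_zeroP bpair_even)
qed

text \<open>If p has a zero after position 0, the first one is at most t, hence at
  most r 0 + 1; so the search finds a zero exactly when p has one.\<close>
lemma H_LPO_correct:
  assumes "cauchy_name r t" "lpo_bound p \<le> t"
  shows "den (bpair p r) H_LPO [0] \<in> LPO p"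
proof (cases "\<exists>n. p n = 0")
  case True
  have "\<exists>i\<le>r 0 + 1. p i = 0"
  proof (cases "p 0 = 0")
    case False
    then have ex: "\<exists>j. 1 \<le> j \<and> p j = 0" using True by (metis less_one not_le)
    define L where "L = (LEAST j. 1 \<le> j \<and> p j = 0)"
    have L: "p L = 0" unfolding L_def using ex by (metis (mono_tags, lifting) LeastI)
    have "real L = lpo_bound p" using ex by (simp add: lpo_bound_def L_def)
    also have "\<dots> \<le> t" by (fact assms(2))
    also have "\<dots> \<le> nu_Q (r 0) + 1" using assms(1) by (rule cauchy_name_first)
    also have "\<dots> \<le> real (r 0) + 1" using nu_Q_le[of "r 0"] by simp
    finally have "L \<le> r 0 + 1" by linarith
    then show ?thesis using L by blast
  qed blast
  then show ?thesis using True by (simp add: LPO_def den_H_LPO)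
qed (simp add: LPO_def den_H_LPO)

theorem LPO_le_BF: "weihrauch_le rep_baire rep_nat LPO rep_lower rep_cauchy B_F"
proof (rule weihrauch_le_by_programs[OF wf_K_LPO wf_H_LPO])
  fix p x assume "rep_baire p = Some x"
  then have "x = p" by (simp add: rep_baire_def)
  moreover have "rep_lower (\<lambda>n. den p K_LPO [n]) = Some (lpo_bound p)"
    by (simp add: den_K_LPO rep_lower_iff lower_name_lpo_lower)
  ultimately show "\<exists>u. rep_lower (\<lambda>n. den p K_LPO [n]) = Some u \<and> B_F u \<noteq> {} \<and>
      (\<forall>r v. rep_cauchy r = Some v \<longrightarrow> v \<in> B_F u \<longrightarrow>
         (\<exists>y. rep_nat (\<lambda>n. den (bpair p r) H_LPO [n]) = Some y \<and> y \<in> LPO x))"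
    by (auto simp: B_F_def rep_nat_def rep_cauchy_iff intro: H_LPO_correct)
qed

section \<open>LLPO reduces to B_I^-\<close>

text \<open>The preprocessing turns p into a name of an interval: the left end
  jumps from -1 to 1/2 once a non-zero even entry of p is seen, and the right
  end drops from 1 to -1/2 once a non-zero odd entry is seen.  As p has at most
  one non-zero entry the interval is proper, and the sign of any point of it
  tells which half of p is zero; a rational 1/4-approximation suffices.\<close>

definition llpo_left :: "baire \<Rightarrow> real" where
  "llpo_left p = (if \<exists>j. even j \<and> p j \<noteq> 0 then 1/2 else -1)"

definition llpo_right :: "baire \<Rightarrow> real" where
  "llpo_right p = (if \<exists>j. odd j \<and> p j \<noteq> 0 then -1/2 else 1)"

definition "EvP = Prec (Comp sgP [Comp Orac [Zero]])
  (ifzP 2 (Proj 0) (ifzP 2 (Comp parP [Comp Succ [Proj 1]])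
     (Comp sgP [Comp Orac [Comp Succ [Proj 1]]]) Zero) (cnst 1))"

definition "OdP = Prec Zero
  (ifzP 2 (Proj 0) (ifzP 2 (Comp parP [Comp Succ [Proj 1]])
     Zero (Comp sgP [Comp Orac [Comp Succ [Proj 1]]])) (cnst 1))"

lemma den_EvP: "den p EvP [k] = (if \<exists>j\<le>k. even j \<and> p j \<noteq> 0 then 1 else 0)"
  by (induction k) (auto simp: EvP_def le_Suc_eq even_iff_mod_2_eq_zero)

lemma den_OdP: "den p OdP [k] = (if \<exists>j\<le>k. odd j \<and> p j \<noteq> 0 then 1 else 0)"
  by (induction k) (auto simp: OdP_def le_Suc_eq even_iff_mod_2_eq_zero)

text \<open>Even positions of the output carry the codes of -1 and 1/2, odd positions
  the codes of 1 and -1/2.\<close>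
definition "K_LLPO = ifzP 1 (Comp parP [Proj 0])
   (ifzP 1 (Comp EvP [Proj 0]) (cnst 2) (cnst 8))
   (ifzP 1 (Comp OdP [Proj 0]) (cnst 5) (cnst 4))"

lemma wf_K_LLPO: "wf_prog K_LLPO 1"
  by (simp add: K_LLPO_def EvP_def OdP_def ifzP_def)

lemma den_K_LLPO: "den p K_LLPO [n] =
   (if even n then (if \<exists>j\<le>n. even j \<and> p j \<noteq> 0 then 8 else 2)
    else (if \<exists>j\<le>n. odd j \<and> p j \<noteq> 0 then 4 else 5))"
proof -
  have "den p K_LLPO [n] =
    (if n mod 2 = 0 then (if den p EvP [n] = 0 then 2 else 8) else (if den p OdP [n] = 0 then 5 else 4))"
    by (simp add: K_LLPO_def)
  also have "\<dots> = (if n mod 2 = 0 then (if \<exists>j\<le>n. even j \<and> p j \<noteq> 0 then 8 else 2)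
      else (if \<exists>j\<le>n. odd j \<and> p j \<noteq> 0 then 4 else 5))"
  proof -
    have "\<And>A B. (if n mod 2 = 0 then (if (if A then 1 else 0) = (0::nat) then 2 else 8)
        else (if (if B then 1 else 0) = (0::nat) then 5 else 4)) =
      (if n mod 2 = 0 then (if A then 8 else 2) else (if B then 4 else (5::nat)))"
      by simp
    then show ?thesis unfolding den_EvP den_OdP .
  qed
  finally show ?thesis by (simp only: even_iff_mod_2_eq_zero)
qed

lemma lower_name_K_LLPO: "lower_name (\<lambda>n. den p K_LLPO [2 * n]) (llpo_left p)"
  unfolding lower_name_def
proof (intro conjI allI impI)
  show "nu_Q (den p K_LLPO [2 * n]) \<le> llpo_left p" for n
    by (auto simp: den_K_LLPO llpo_left_def nu_Q_consts)
next
  fix e :: real assume e: "0 < e"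
  show "\<exists>n. llpo_left p - e < nu_Q (den p K_LLPO [2 * n])"
  proof (cases "\<exists>j. even j \<and> p j \<noteq> 0")
    case True
    then obtain j where "even j" "p j \<noteq> 0" by blast
    then have "den p K_LLPO [2 * j] = 8" by (auto simp: den_K_LLPO intro!: exI[of _ j])
    then show ?thesis using e True by (intro exI[of _ j]) (simp add: llpo_left_def nu_Q_consts)
  next
    case False
    then have "llpo_left p = -1" by (simp only: llpo_left_def if_False)
    moreover have "-1 \<le> nu_Q (den p K_LLPO [2 * 0])" by (auto simp: den_K_LLPO nu_Q_consts)
    ultimately show ?thesis using e by (intro exI[of _ 0]) simp
  qed
qed

lemma upper_name_K_LLPO: "upper_name (\<lambda>n. den p K_LLPO [2 * n + 1]) (llpo_right p)"
  unfolding upper_name_def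
proof (intro conjI allI impI)
  show "llpo_right p \<le> nu_Q (den p K_LLPO [2 * n + 1])" for n
    by (auto simp: den_K_LLPO llpo_right_def nu_Q_consts)
next
  fix e :: real assume e: "0 < e"
  show "\<exists>n. nu_Q (den p K_LLPO [2 * n + 1]) < llpo_right p + e"
  proof (cases "\<exists>j. odd j \<and> p j \<noteq> 0")
    case True
    then obtain j where "odd j" "p j \<noteq> 0" by blast
    then have "den p K_LLPO [2 * j + 1] = 4" by (auto simp: den_K_LLPO intro!: exI[of _ j])
    then show ?thesis using e True by (intro exI[of _ j]) (simp add: llpo_right_def nu_Q_consts)
  next
    case False
    then have "llpo_right p = 1" by (simp only: llpo_right_def if_False)
    moreover have "nu_Q (den p K_LLPO [2 * 0 + 1]) \<le> 1" by (auto simp: den_K_LLPO nu_Q_consts)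
    ultimately show ?thesis using e by (intro exI[of _ 0]) simp
  qed
qed

text \<open>diag_index c k is min k s, where s is the diagonal of the Cantor pairing
  on which c lies; for k = c it is s itself, which yields the first component
  of the decoded pair.\<close>
primrec diag_index :: "nat \<Rightarrow> nat \<Rightarrow> nat" where
  "diag_index c 0 = 0"
| "diag_index c (Suc k) = diag_index c k + (if triangle (Suc (diag_index c k)) \<le> c then 1 else 0)"

lemma triangle_mono: "a \<le> b \<Longrightarrow> triangle a \<le> triangle b"
  by (induction b) (auto simp: le_Suc_eq)

lemma le_triangle: "n \<le> triangle n"
  by (induction n) auto

lemma diag_index_eq:
  assumes "triangle s \<le> c" "c < triangle (Suc s)"
  shows "diag_index c k = min k s"
proof (induction k)
  case (Suc k)
  show ?case
  proof (cases "k < s")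
    case True
    then have "triangle (Suc k) \<le> c" using triangle_mono[of "Suc k" s] assms(1) by simp
    then show ?thesis using True Suc by simp
  next
    case False
    then show ?thesis using Suc assms(2) by simp
  qed
qed simp

lemma fst_prod_decode: "fst (prod_decode c) = c - triangle (diag_index c c)"
proof -
  obtain a b where ab: "prod_decode c = (a, b)" by (cases "prod_decode c")
  then have "prod_encode (a, b) = c" using prod_decode_inverse[of c] by simp
  then have c: "c = triangle (a + b) + a" by (simp add: prod_encode_def)
  then have "diag_index c c = min c (a + b)" by (intro diag_index_eq) simp_all
  moreover have "a + b \<le> c" using c le_triangle[of "a + b"] by simp
  ultimately show ?thesis using ab c by simp
qed

lemma nu_Q_pos_iff: "nu_Q c > 0 \<longleftrightarrow> (let a = fst (prod_decode c) in a mod 2 = 0 \<and> a \<noteq> 0)"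
proof -
  obtain a b where ab: "prod_decode c = (a, b)" by (cases "prod_decode c")
  then have "nu_Q c > 0 \<longleftrightarrow> int_decode a > 0" by (simp add: nu_Q_def zero_less_divide_iff)
  also have "\<dots> \<longleftrightarrow> a mod 2 = 0 \<and> a \<noteq> 0"
    by (auto simp: int_decode_def sum_decode_def even_iff_mod_2_eq_zero[symmetric] elim: evenE)
  finally show ?thesis using ab by simp
qed

definition "diagP = Prec Zero (Comp addP [Proj 0, Comp leP [Comp triP [Comp Succ [Proj 0]], Proj 2]])"

lemma den_diagP: "den p diagP [k, c] = diag_index c k"
  by (induction k) (simp_all add: diagP_def)

definition "posP = Comp (ifzP 1 (Comp parP [Proj 0]) (Comp sgP [Proj 0]) Zero)
   [Comp monusP [Comp triP [Comp diagP [Proj 0, Proj 0]], Proj 0]]"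

lemma den_posP: "den p posP [c] = (if nu_Q c > 0 then 1 else 0)"
proof -
  have "den p posP [c] =
    (let a = c - triangle (diag_index c c) in if a mod 2 = 0 then (if a = 0 then 0 else 1) else 0)"
    by (simp add: posP_def den_diagP Let_def)
  then show ?thesis by (simp add: nu_Q_pos_iff fst_prod_decode Let_def)
qed

text \<open>Position 5 of the paired input is r 2, an approximation of the solution
  up to 1/4.\<close>
definition "H_LLPO = Comp posP [Comp Orac [cnst 5]]"

lemma wf_H_LLPO: "wf_prog H_LLPO 1"
  by (simp add: H_LLPO_def posP_def diagP_def ifzP_def)

lemma den_H_LLPO: "den (bpair p r) H_LLPO [n] = (if nu_Q (r 2) > 0 then 1 else 0)"
  using bpair_odd[of p r 2] by (simp add: H_LLPO_def den_posP)

lemma LLPO_eq: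
  assumes "\<forall>k l. p k \<noteq> 0 \<and> p l \<noteq> 0 \<longrightarrow> k = l"
  shows "LLPO p = {i. (i = 0 \<and> (\<forall>n. p (2 * n) = 0)) \<or> (i = 1 \<and> (\<forall>n. p (2 * n + 1) = 0))}"
  by (simp only: LLPO_def if_P[OF assms])

text \<open>Every point of the interval determines a correct answer: it is at least
  1/2 if p has a non-zero even entry and at most -1/2 if it has a non-zero odd one.\<close>
lemma H_LLPO_correct:
  assumes single: "\<forall>k l. p k \<noteq> 0 \<and> p l \<noteq> 0 \<longrightarrow> k = l"
    and t: "cauchy_name r t" "llpo_left p \<le> t" "t \<le> llpo_right p"
  shows "den (bpair p r) H_LLPO [0] \<in> LLPO p"
proof -
  have approx: "\<bar>nu_Q (r 2) - t\<bar> \<le> 1/4"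
    using t(1) unfolding cauchy_name_def by (drule_tac x=2 in spec) (simp add: power2_eq_square)
  have evens: "\<forall>n. p (2 * n) = 0" if "\<not> (\<exists>j. even j \<and> p j \<noteq> 0)"
    using that by auto
  have odds: "\<forall>n. p (2 * n + 1) = 0" if "\<not> (\<exists>j. odd j \<and> p j \<noteq> 0)"
  proof
    fix n :: nat
    have "odd (2 * n + 1)" by simp
    then show "p (2 * n + 1) = 0" using that by blast
  qed
  show ?thesis
  proof (cases "\<exists>j. even j \<and> p j \<noteq> 0")
    case True
    then obtain j where j: "even j" "p j \<noteq> 0" by blast
    have "p (2 * n + 1) = 0" for n
    proof (rule ccontr)
      assume "p (2 * n + 1) \<noteq> 0"
      then have "2 * n + 1 = j" using single j(2) by blast
      then show False using j(1) by auto
    qed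
    moreover have "1/2 \<le> t" using t(2) True by (simp add: llpo_left_def)
    then have "nu_Q (r 2) > 0" using approx by argo
    ultimately show ?thesis by (simp add: LLPO_eq[OF single] den_H_LLPO)
  next
    case False
    note no_even = evens[OF False]
    show ?thesis
    proof (cases "\<exists>j. odd j \<and> p j \<noteq> 0")
      case True
      then have "t \<le> -1/2" using t(3) by (simp add: llpo_right_def)
      then have "\<not> nu_Q (r 2) > 0" using approx by argo
      then show ?thesis using no_even by (simp add: LLPO_eq[OF single] den_H_LLPO)
    next
      case False
      then show ?thesis using no_even odds by (simp add: LLPO_eq[OF single] den_H_LLPO)
    qed
  qed
qed

text \<open>An instance of LLPO has at most one non-zero entry, so it cannot have
  both a non-zero even and a non-zero odd entry.\<close>
lemma llpo_left_less_right:
  assumes single: "\<forall>k l. p k \<noteq> 0 \<and> p l \<noteq> 0 \<longrightarrow> k = l"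
  shows "llpo_left p < llpo_right p"
proof -
  have "\<not> ((\<exists>j. even j \<and> p j \<noteq> 0) \<and> (\<exists>j. odd j \<and> p j \<noteq> 0))"
  proof
    assume "(\<exists>j. even j \<and> p j \<noteq> 0) \<and> (\<exists>j. odd j \<and> p j \<noteq> 0)"
    then obtain i j where "even i" "p i \<noteq> 0" "odd j" "p j \<noteq> 0" by blast
    moreover from single \<open>p i \<noteq> 0\<close> \<open>p j \<noteq> 0\<close> have "i = j" by blast
    ultimately show False by simp
  qed
  then show ?thesis by (auto simp: llpo_left_def llpo_right_def)
qed

theorem LLPO_le_BI:
  "weihrauch_le rep_baire rep_nat LLPO (rep_prod rep_lower rep_upper) rep_cauchy B_I_minus"
proof (rule weihrauch_le_by_programs[OF wf_K_LLPO wf_H_LLPO])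
  fix p x assume "rep_baire p = Some x" "LLPO x \<noteq> {}"
  then have x: "x = p" and single: "\<forall>k l. p k \<noteq> 0 \<and> p l \<noteq> 0 \<longrightarrow> k = l"
    by (auto simp: rep_baire_def LLPO_def split: if_splits)
  let ?u = "(llpo_left p, llpo_right p)"
  have name: "rep_prod rep_lower rep_upper (\<lambda>n. den p K_LLPO [n]) = Some ?u"
    using lower_name_K_LLPO upper_name_K_LLPO by (simp add: rep_prod_iff)
  have proper: "llpo_left p < llpo_right p"
    using single by (rule llpo_left_less_right)
  have solve: "\<exists>y. rep_nat (\<lambda>n. den (bpair p r) H_LLPO [n]) = Some y \<and> y \<in> LLPO x"
    if "rep_cauchy r = Some v" "v \<in> B_I_minus ?u" for r v
  proof -
    have "cauchy_name r v" "llpo_left p \<le> v" "v \<le> llpo_right p"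
      using that proper by (auto simp: rep_cauchy_iff B_I_minus_def)
    then have "den (bpair p r) H_LLPO [0] \<in> LLPO p" by (rule H_LLPO_correct[OF single])
    then show ?thesis using x by (simp add: rep_nat_def)
  qed
  show "\<exists>u. rep_prod rep_lower rep_upper (\<lambda>n. den p K_LLPO [n]) = Some u \<and>
      B_I_minus u \<noteq> {} \<and>
      (\<forall>r v. rep_cauchy r = Some v \<longrightarrow> v \<in> B_I_minus u \<longrightarrow>
         (\<exists>y. rep_nat (\<lambda>n. den (bpair p r) H_LLPO [n]) = Some y \<and> y \<in> LLPO x))"
    using name proper solve by (intro exI[of _ ?u]) (simp add: B_I_minus_def)
qed

section \<open>The reverse reductions fail: a continuity argument\<close>

text \<open>A reduction to a problem with natural-number answers must in particular
  work with the realizer that answers c k on instance k, for any choice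
  function c, computable or not.\<close>
lemma weihrauch_le_discrete:
  assumes "weihrauch_le \<delta>X \<delta>Y f rep_baire rep_nat g" and "\<And>k. g k \<noteq> {} \<Longrightarrow> c k \<in> g k"
  shows "\<exists>H K. computable H \<and> computable K \<and>
    (\<forall>p x. \<delta>X p = Some x \<longrightarrow> f x \<noteq> {} \<longrightarrow>
       (\<exists>k q y. K p = Some k \<and> H (bpair p (\<lambda>_. c k)) = Some q \<and> \<delta>Y q = Some y \<and> y \<in> f x))"
proof -
  obtain H K where HK: "computable H" "computable K" and
    reduce: "\<And>G. realizer rep_baire rep_nat g G \<Longrightarrow>
      realizer \<delta>X \<delta>Y f (\<lambda>p. Option.bind (K p) (\<lambda>k. Option.bind (G k) (\<lambda>r. H (bpair p r))))"
    using assms(1) unfolding weihrauch_le_def by blast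
  have "realizer rep_baire rep_nat g (\<lambda>k. Some (\<lambda>_. c k))"
    using assms(2) by (auto simp: realizer_def rep_baire_def rep_nat_def)
  then have "realizer \<delta>X \<delta>Y f (\<lambda>p. Option.bind (K p) (\<lambda>k. H (bpair p (\<lambda>_. c k))))"
    using reduce by fastforce
  then have "\<forall>p x. \<delta>X p = Some x \<longrightarrow> f x \<noteq> {} \<longrightarrow>
       (\<exists>k q y. K p = Some k \<and> H (bpair p (\<lambda>_. c k)) = Some q \<and> \<delta>Y q = Some y \<and> y \<in> f x)"
    unfolding realizer_def bind_eq_Some_conv by blast
  with HK show ?thesis by blast
qed

text \<open>Let c k answer a if the instance k has the
  finitely witnessed property P and b otherwise.  Then the output of the
  reduction, as a function of its input p on a set D, is continuous at some
  point: either P holds at some K p, and by continuity of K near p as well, or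
  P fails on all of K ` D.  In both cases the answer is locally constant, and
  then continuity of H takes over.\<close>
lemma discrete_reduction_continuous_somewhere:
  assumes H: "computable H" and K: "computable K" and "p0 \<in> D"
    and defined: "\<And>p. p \<in> D \<Longrightarrow> \<exists>k q. K p = Some k \<and> H (bpair p (\<lambda>_. c k)) = Some q"
    and witnessed: "\<And>k. P k \<Longrightarrow> \<exists>n. \<forall>k'. k' n = k n \<longrightarrow> P k'"
    and answer: "\<And>k. c k = (if P k then a else b)"
  shows "\<exists>p k q. p \<in> D \<and> K p = Some k \<and> H (bpair p (\<lambda>_. c k)) = Some q \<and>
    (\<forall>m. \<exists>N. \<forall>p' k' q'. p' \<in> D \<longrightarrow> agree N p p' \<longrightarrow> K p' = Some k' \<longrightarrow>
        H (bpair p' (\<lambda>_. c k')) = Some q' \<longrightarrow> q' m = q m)"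
proof -
  obtain p k N where p: "p \<in> D" "K p = Some k"
    and stable: "\<And>p' k'. p' \<in> D \<Longrightarrow> agree N p p' \<Longrightarrow> K p' = Some k' \<Longrightarrow> c k' = c k"
  proof (cases "\<exists>p\<in>D. \<exists>k. K p = Some k \<and> P k")
    case True
    then obtain p k where p: "p \<in> D" "K p = Some k" "P k" by blast
    then obtain n where n: "\<forall>k'. k' n = k n \<longrightarrow> P k'" using witnessed by blast
    obtain N where N: "\<forall>p' k'. agree N p p' \<longrightarrow> K p' = Some k' \<longrightarrow> k' n = k n"
      using computable_continuous[of K p k n, OF K p(2)] by (rule exE)
    have "c k' = c k" if "agree N p p'" "K p' = Some k'" for p' k'
      using N n p(3) that by (simp add: answer)
    then show thesis by (rule that[OF p(1,2)]) blast
  next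
    case False
    obtain k where "K p0 = Some k" using defined \<open>p0 \<in> D\<close> by blast
    moreover have "c k' = c k" if "p' \<in> D" "K p' = Some k'" for p' k'
      using False \<open>K p0 = Some k\<close> \<open>p0 \<in> D\<close> that by (auto simp: answer)
    ultimately show thesis using \<open>p0 \<in> D\<close> by (rule_tac that) blast+
  qed
  obtain q where q: "H (bpair p (\<lambda>_. c k)) = Some q" using defined p by force
  have "\<exists>N'. \<forall>p' k' q'. p' \<in> D \<longrightarrow> agree N' p p' \<longrightarrow> K p' = Some k' \<longrightarrow>
      H (bpair p' (\<lambda>_. c k')) = Some q' \<longrightarrow> q' m = q m" for m
  proof -
    obtain M where M: "\<forall>r q'. agree M (bpair p (\<lambda>_. c k)) r \<longrightarrow> H r = Some q' \<longrightarrow> q' m = q m"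
      using computable_continuous[of H "bpair p (\<lambda>_. c k)" q m, OF H q] by (rule exE)
    have "q' m = q m" if p': "p' \<in> D" "agree (max N M) p p'" "K p' = Some k'"
      "H (bpair p' (\<lambda>_. c k')) = Some q'" for p' k' q'
    proof -
      from agree_max[OF p'(2)] have agree_N: "agree N p p'" and agree_M: "agree M p p'" by auto
      have "c k' = c k" by (rule stable[OF p'(1) agree_N p'(3)])
      moreover have "agree M (bpair p (\<lambda>_. c k)) (bpair p' (\<lambda>_. c k))"
        by (rule agree_bpair[OF agree_M])
      ultimately show ?thesis using M p'(4) by simp
    qed
    then show ?thesis by blast
  qed
  with p q show ?thesis by blast
qed

definition lpo_answer :: "baire \<Rightarrow> nat" where
  "lpo_answer k = (if \<exists>n. k n = 0 then 0 else 1)"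

lemma lpo_answer_LPO: "lpo_answer k \<in> LPO k"
  by (simp add: lpo_answer_def LPO_def)

lemma lower_name_raise:
  assumes "lower_name p x"
  shows "\<exists>p' z. lower_name p' z \<and> agree N p p' \<and> w \<le> z"
proof -
  define z :: nat where "z = nat \<lceil>\<bar>x\<bar> + \<bar>w\<bar>\<rceil>"
  have z: "w \<le> real z" "x \<le> real z" unfolding z_def by linarith+
  define p' where "p' = (\<lambda>i. if i < N then p i else nat_code z)"
  have "lower_name p' (real z)"
    unfolding lower_name_def
  proof (intro conjI allI impI)
    show "nu_Q (p' n) \<le> real z" for n
      using assms z by (auto simp: p'_def lower_name_def nu_Q_nat_code intro: order_trans)
    show "\<exists>n. real z - e < nu_Q (p' n)" if "0 < e" for e :: real
      using that by (intro exI[of _ N]) (simp add: p'_def nu_Q_nat_code)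
  qed
  moreover have "agree N p p'" by (simp add: agree_def p'_def)
  ultimately show ?thesis using z by blast
qed

text \<open>Near a point where the reduction is continuous, a lower name can be
  changed beyond any prefix to name a number above the solution computed there.\<close>
theorem BF_not_le_LPO: "\<not> weihrauch_le rep_lower rep_cauchy B_F rep_baire rep_nat LPO"
proof
  assume le: "weihrauch_le rep_lower rep_cauchy B_F rep_baire rep_nat LPO"
  obtain H K where H: "computable H" and K: "computable K" and
    reduce: "\<And>p x. rep_lower p = Some x \<Longrightarrow> B_F x \<noteq> {} \<Longrightarrow>
       \<exists>k q y. K p = Some k \<and> H (bpair p (\<lambda>_. lpo_answer k)) = Some q \<and>
         rep_cauchy q = Some y \<and> y \<in> B_F x"
    using weihrauch_le_discrete[OF le lpo_answer_LPO] by blast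
  have solve: "\<exists>k q y. K p = Some k \<and> H (bpair p (\<lambda>_. lpo_answer k)) = Some q \<and>
      cauchy_name q y \<and> x \<le> y" if "lower_name p x" for p x
    using reduce[of p x] that by (auto simp: rep_lower_iff rep_cauchy_iff B_F_def)
  define D where "D = {p. \<exists>x. lower_name p x}"
  have zero: "(\<lambda>_. 0) \<in> D" by (auto simp: D_def lower_name_def nu_Q_0)
  have defined: "\<exists>k q. K p = Some k \<and> H (bpair p (\<lambda>_. lpo_answer k)) = Some q" if "p \<in> D" for p
    using that solve by (force simp: D_def)
  have witnessed: "\<exists>n. \<forall>k'. k' n = k n \<longrightarrow> (\<exists>n. k' n = 0)" if "\<exists>n. k n = 0" for k :: baire
    using that by metis
  obtain p k q where "p \<in> D" "K p = Some k" and q: "H (bpair p (\<lambda>_. lpo_answer k)) = Some q"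
    and continuous: "\<And>m. \<exists>N. \<forall>p' k' q'. p' \<in> D \<longrightarrow> agree N p p' \<longrightarrow> K p' = Some k' \<longrightarrow>
        H (bpair p' (\<lambda>_. lpo_answer k')) = Some q' \<longrightarrow> q' m = q m"
    using discrete_reduction_continuous_somewhere[OF H K zero defined witnessed lpo_answer_def] by blast
  obtain x where x: "lower_name p x" using \<open>p \<in> D\<close> by (auto simp: D_def)
  obtain N where N: "\<forall>p' k' q'. p' \<in> D \<longrightarrow> agree N p p' \<longrightarrow> K p' = Some k' \<longrightarrow>
        H (bpair p' (\<lambda>_. lpo_answer k')) = Some q' \<longrightarrow> q' 0 = q 0"
    using continuous by blast
  obtain p' z where p': "lower_name p' z" "agree N p p'" "nu_Q (q 0) + 2 \<le> z"
    using lower_name_raise[OF x] by blast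
  obtain k' q' y where "K p' = Some k'" "H (bpair p' (\<lambda>_. lpo_answer k')) = Some q'"
    and y: "cauchy_name q' y" "z \<le> y"
    using solve[OF p'(1)] by blast
  with N p' have "q' 0 = q 0" by (auto simp: D_def)
  then have "y \<le> nu_Q (q 0) + 1" using cauchy_name_first[OF y(1)] by simp
  then show False using y(2) p'(3) by linarith
qed

definition llpo_answer :: "baire \<Rightarrow> nat" where
  "llpo_answer k = (if \<exists>n. k (2 * n) \<noteq> 0 then 1 else 0)"

lemma llpo_answer_LLPO:
  assumes "LLPO k \<noteq> {}"
  shows "llpo_answer k \<in> LLPO k"
proof -
  have single: "\<forall>i j. k i \<noteq> 0 \<and> k j \<noteq> 0 \<longrightarrow> i = j"
    using assms by (auto simp: LLPO_def split: if_splits)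
  have "\<forall>m. k (2 * m + 1) = 0" if "k (2 * n) \<noteq> 0" for n
  proof
    fix m show "k (2 * m + 1) = 0"
    proof (rule ccontr)
      assume "k (2 * m + 1) \<noteq> 0"
      then have "2 * m + 1 = 2 * n" using single that by blast
      then show False by presburger
    qed
  qed
  then show ?thesis by (auto simp: llpo_answer_def LLPO_eq[OF single])
qed

definition interval_name :: "baire \<Rightarrow> real \<Rightarrow> real \<Rightarrow> bool" where
  "interval_name p x y \<longleftrightarrow>
     lower_name (\<lambda>n. p (2 * n)) x \<and> upper_name (\<lambda>n. p (2 * n + 1)) y \<and> x < y"

lemma interval_name_shrink:
  assumes "interval_name p x y" "a \<in> \<rat>" "b \<in> \<rat>" "x \<le> a" "a < b" "b \<le> y"
  shows "\<exists>p'. interval_name p' a b \<and> agree N p p'"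
proof -
  have lower: "lower_name (\<lambda>n. p (2 * n)) x" and upper: "upper_name (\<lambda>n. p (2 * n + 1)) y"
    using assms(1) by (simp_all add: interval_name_def)
  obtain ca cb where c: "nu_Q ca = a" "nu_Q cb = b" using nu_Q_surj assms(2,3) by metis
  define p' where "p' = (\<lambda>i. if i < N then p i else if even i then ca else cb)"
  have "lower_name (\<lambda>n. p' (2 * n)) a"
    unfolding lower_name_def
  proof (intro conjI allI impI)
    show "nu_Q (p' (2 * n)) \<le> a" for n
      using lower assms(4) c by (auto simp: p'_def lower_name_def intro: order_trans)
    show "\<exists>n. a - e < nu_Q (p' (2 * n))" if "0 < e" for e :: real
      using that c by (intro exI[of _ N]) (simp add: p'_def)
  qed
  moreover have "upper_name (\<lambda>n. p' (2 * n + 1)) b"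
    unfolding upper_name_def
  proof (intro conjI allI impI)
    show "b \<le> nu_Q (p' (2 * n + 1))" for n
      using upper assms(6) c by (auto simp: p'_def upper_name_def intro: order_trans)
    show "\<exists>n. nu_Q (p' (2 * n + 1)) < b + e" if "0 < e" for e :: real
      using that c by (intro exI[of _ N]) (simp add: p'_def)
  qed
  moreover have "agree N p p'" by (simp add: agree_def p'_def)
  ultimately show ?thesis using assms(5) by (auto simp: interval_name_def)
qed

text \<open>Near a point where the reduction is continuous, an interval name can be
  changed beyond any prefix to name either of two disjoint subintervals, but
  the m-th approximation of the solution stays fixed.\<close>
theorem BI_not_le_LLPO:
  "\<not> weihrauch_le (rep_prod rep_lower rep_upper) rep_cauchy B_I_minus rep_baire rep_nat LLPO"
proof
  assume le: "weihrauch_le (rep_prod rep_lower rep_upper) rep_cauchy B_I_minus rep_baire rep_nat LLPO"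
  obtain H K where H: "computable H" and K: "computable K" and
    reduce: "\<And>p x. rep_prod rep_lower rep_upper p = Some x \<Longrightarrow> B_I_minus x \<noteq> {} \<Longrightarrow>
       \<exists>k q y. K p = Some k \<and> H (bpair p (\<lambda>_. llpo_answer k)) = Some q \<and>
         rep_cauchy q = Some y \<and> y \<in> B_I_minus x"
    using weihrauch_le_discrete[OF le llpo_answer_LLPO] by blast
  have solve: "\<exists>k q t. K p = Some k \<and> H (bpair p (\<lambda>_. llpo_answer k)) = Some q \<and>
      cauchy_name q t \<and> x \<le> t \<and> t \<le> y" if "interval_name p x y" for p x y
    using reduce[of p "(x, y)"] that
    by (auto simp: interval_name_def rep_prod_iff rep_cauchy_iff B_I_minus_def)
  define D where "D = {p. \<exists>x y. interval_name p x y}"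
  define p0 :: baire where "p0 i = (if even i then 0 else 5)" for i
  have "interval_name p0 0 1"
    by (simp add: interval_name_def lower_name_def upper_name_def p0_def nu_Q_0 nu_Q_consts)
  then have p0: "p0 \<in> D" by (auto simp: D_def)
  have defined: "\<exists>k q. K p = Some k \<and> H (bpair p (\<lambda>_. llpo_answer k)) = Some q" if "p \<in> D" for p
    using that solve by (force simp: D_def)
  have witnessed: "\<exists>n. \<forall>k'. k' n = k n \<longrightarrow> (\<exists>n. k' (2 * n) \<noteq> 0)"
    if "\<exists>n. k (2 * n) \<noteq> 0" for k :: baire
    using that by metis
  obtain p k q where "p \<in> D" "K p = Some k" and q: "H (bpair p (\<lambda>_. llpo_answer k)) = Some q"
    and continuous: "\<And>m. \<exists>N. \<forall>p' k' q'. p' \<in> D \<longrightarrow> agree N p p' \<longrightarrow> K p' = Some k' \<longrightarrow>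
        H (bpair p' (\<lambda>_. llpo_answer k')) = Some q' \<longrightarrow> q' m = q m"
    using discrete_reduction_continuous_somewhere[OF H K p0 defined witnessed llpo_answer_def] by blast
  obtain x y where xy: "interval_name p x y" using \<open>p \<in> D\<close> by (auto simp: D_def)
  obtain a1 b1 a2 b2 where rat: "a1 \<in> \<rat>" "b1 \<in> \<rat>" "a2 \<in> \<rat>" "b2 \<in> \<rat>"
    and order: "x < a1" "a1 < b1" "b1 < a2" "a2 < b2" "b2 < y"
    using xy unfolding interval_name_def by (metis Rats_dense_in_real)
  obtain m where "(1/2::real) ^ m < (a2 - b1) / 2"
    using real_arch_pow_inv[of "(a2 - b1) / 2" "1/2"] order by auto
  then have m: "2 * (1/2::real) ^ m < a2 - b1" by simp
  obtain N where N: "\<forall>p' k' q'. p' \<in> D \<longrightarrow> agree N p p' \<longrightarrow> K p' = Some k' \<longrightarrow>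
        H (bpair p' (\<lambda>_. llpo_answer k')) = Some q' \<longrightarrow> q' m = q m"
    using continuous by blast
  text \<open>Shrinking the interval to [a,b] does not change the m-th output, so
    q m approximates a point of every such subinterval.\<close>
  have near: "\<exists>t. a \<le> t \<and> t \<le> b \<and> \<bar>nu_Q (q m) - t\<bar> \<le> (1/2) ^ m"
    if ab: "a \<in> \<rat>" "b \<in> \<rat>" "x \<le> a" "a < b" "b \<le> y" for a b
  proof -
    obtain p' where p': "interval_name p' a b" "agree N p p'"
      using interval_name_shrink[OF xy ab] by blast
    then obtain k' q' t where "K p' = Some k'" "H (bpair p' (\<lambda>_. llpo_answer k')) = Some q'"
      and t: "cauchy_name q' t" "a \<le> t" "t \<le> b"
      using solve by blast
    with N p' have "q' m = q m" by (auto simp: D_def)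
    then show ?thesis using t unfolding cauchy_name_def by metis
  qed
  obtain t1 where t1: "t1 \<le> b1" "\<bar>nu_Q (q m) - t1\<bar> \<le> (1/2) ^ m"
    using near[of a1 b1] rat order by auto
  obtain t2 where t2: "a2 \<le> t2" "\<bar>nu_Q (q m) - t2\<bar> \<le> (1/2) ^ m"
    using near[of a2 b2] rat order by auto
  from t1 t2 m show False by argo
qed

theorem proposition4p5:
  shows "weihrauch_less rep_baire rep_nat LPO rep_lower rep_cauchy B_F
       \<and> weihrauch_less rep_baire rep_nat LLPO (rep_prod rep_lower rep_upper) rep_cauchy B_I_minus"
  unfolding weihrauch_less_def
  using LPO_le_BF BF_not_le_LPO LLPO_le_BI BI_not_le_LLPO by blast

end
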